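(* Let $\epsilon>0$ and let $G=(S,B,E)$ be a bipartite graph with weights $w:S\to\mathbb{R}_+$ and a fixed arrival order of $B$. Run $\epsilon$-\textsc{Ranking} with independent uniform samples $x_j\in[0,1]$, $j\in S$. Then for every edge $\{i,j\}\in E$ with $i\in B$, $j\in S$, \[ \mathbb{E}[r_j+u_i]\ge\left(1-\frac{1}{e}-\epsilon\right)w_j. \]
   Context: $\epsilon$-\textsc{Ranking}: for each $j\in S$ sample independently a uniformly random $x_j\in[0,1]$; when buyer $i$ arrives (revealing $N(i)\subseteq S$), match $i$ to an unmatched $j\in N(i)$ maximizing $w_j(1-e^{x_j-1-\epsilon})$ (leave $i$ unmatched if none exists). Revenue: $r_j=w_je^{x_j-1-\epsilon}$ if $j$ is matched at the end, and $r_j=0$ otherwise. Utility: $u_i=w_j(1-e^{x_j-1-\epsilon})$ if buyer $i$ is matched to $j$, and $u_i=0$ if $i$ is unmatched. *)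

theory Defs
  imports "HOL-Probability.Probability"
begin

definition eps_util :: "real \<Rightarrow> ('s \<Rightarrow> real) \<Rightarrow> ('s \<Rightarrow> real) \<Rightarrow> 's \<Rightarrow> real" where
  "eps_util eps w x j = w j * (1 - exp (x j - 1 - eps))"

definition eps_rev :: "real \<Rightarrow> ('s \<Rightarrow> real) \<Rightarrow> ('s \<Rightarrow> real) \<Rightarrow> 's \<Rightarrow> real" where
  "eps_rev eps w x j = w j * exp (x j - 1 - eps)"

definition eps_choose ::
  "real \<Rightarrow> ('s::linorder \<Rightarrow> real) \<Rightarrow> 's set \<Rightarrow> ('b \<times> 's) set \<Rightarrow> ('s \<Rightarrow> real)
    \<Rightarrow> 'b \<Rightarrow> ('b \<Rightarrow> 's option) \<Rightarrow> 's option" where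
  "eps_choose eps w S E x i m =
     (let C = {j \<in> S. (i, j) \<in> E \<and> j \<notin> ran m} in
      if C = {} then None
      else Some (LEAST j. j \<in> C \<and> (\<forall>k\<in>C. eps_util eps w x k \<le> eps_util eps w x j)))"

primrec eps_ranking_run ::
  "real \<Rightarrow> ('s::linorder \<Rightarrow> real) \<Rightarrow> 's set \<Rightarrow> ('b \<times> 's) set \<Rightarrow> ('s \<Rightarrow> real)
    \<Rightarrow> 'b list \<Rightarrow> ('b \<Rightarrow> 's option) \<Rightarrow> ('b \<Rightarrow> 's option)" where
  "eps_ranking_run eps w S E x [] m = m"
| "eps_ranking_run eps w S E x (i # bs) m =
     eps_ranking_run eps w S E x bs (m(i := eps_choose eps w S E x i m))"

definition eps_ranking ::
  "real \<Rightarrow> ('s::linorder \<Rightarrow> real) \<Rightarrow> 's set \<Rightarrow> ('b \<times> 's) set \<Rightarrow> ('s \<Rightarrow> real)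
    \<Rightarrow> 'b list \<Rightarrow> ('b \<Rightarrow> 's option)" where
  "eps_ranking eps w S E x bs = eps_ranking_run eps w S E x bs Map.empty"

definition revenue ::
  "real \<Rightarrow> ('s::linorder \<Rightarrow> real) \<Rightarrow> 's set \<Rightarrow> ('b \<times> 's) set \<Rightarrow> ('s \<Rightarrow> real)
    \<Rightarrow> 'b list \<Rightarrow> 's \<Rightarrow> real" where
  "revenue eps w S E x bs j =
     (if j \<in> ran (eps_ranking eps w S E x bs) then eps_rev eps w x j else 0)"

definition utility ::
  "real \<Rightarrow> ('s::linorder \<Rightarrow> real) \<Rightarrow> 's set \<Rightarrow> ('b \<times> 's) set \<Rightarrow> ('s \<Rightarrow> real)
    \<Rightarrow> 'b list \<Rightarrow> 'b \<Rightarrow> real" where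
  "utility eps w S E x bs i =
     (case eps_ranking eps w S E x bs i of None \<Rightarrow> 0 | Some k \<Rightarrow> eps_util eps w x k)"

definition sample_space :: "'s set \<Rightarrow> ('s \<Rightarrow> real) measure" where
  "sample_space S = PiM S (\<lambda>_. uniform_measure lborel {0..1})"

end

theory Submission
  imports Defs
begin

(* Fix the edge (i, j) and run the algorithm with the same samples also on the instance without
   seller j; let c be the utility of buyer i there. Removing j changes the set of free sellers by at
   most one element at every step, so every buyer is weakly better off when j is present, and as
   long as j is unmatched both runs coincide, so every neighbour of j that has arrived gets utility
   at least w_j (1 - e^(x_j - 1 - eps)). Hence
     r_j + u_i >= c + [c < w_j (1 - e^(x_j - 1 - eps))] w_j e^(x_j - 1 - eps).
   Since c does not depend on x_j, it remains to integrate over x_j: for every c >= 0 the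
   right-hand side has mean at least (1 - 1/e - eps) w_j. *)

section \<open>Greedy choice with ties broken by the least index\<close>

definition least_argmax :: "('s::linorder \<Rightarrow> real) \<Rightarrow> 's set \<Rightarrow> 's" where
  "least_argmax u C = (LEAST j. j \<in> C \<and> (\<forall>k\<in>C. u k \<le> u j))"

definition greedy_choice :: "('s::linorder \<Rightarrow> real) \<Rightarrow> 's set \<Rightarrow> 's option" where
  "greedy_choice u C = (if C = {} then None else Some (least_argmax u C))"

lemma least_argmax_eq_iff:
  assumes "finite C" "C \<noteq> {}"
  shows "least_argmax u C = c \<longleftrightarrow>
    c \<in> C \<and> (\<forall>k\<in>C. u k \<le> u c) \<and> (\<forall>b\<in>C. b < c \<longrightarrow> (\<exists>k\<in>C. u b < u k))"
proof -
  let ?P = "\<lambda>j. j \<in> C \<and> (\<forall>k\<in>C. u k \<le> u j)"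
  have "Max (u ` C) \<in> u ` C" using assms by simp
  then obtain a where "a \<in> C" "Max (u ` C) = u a" by blast
  then have "?P a" using assms(1) by (metis Max_ge finite_imageI imageI)
  have fin: "finite {b. ?P b}" using assms(1) by simp
  have least_Min: "least_argmax u C = Min {b. ?P b}"
    unfolding least_argmax_def using Least_Min[OF fin] \<open>?P a\<close> by blast
  have least: "?P (least_argmax u C)" "\<And>b. ?P b \<Longrightarrow> least_argmax u C \<le> b"
    unfolding least_Min using Min_in[OF fin] Min_le[OF fin] \<open>?P a\<close> by blast+
  show ?thesis
  proof
    assume "least_argmax u C = c"
    then show "c \<in> C \<and> (\<forall>k\<in>C. u k \<le> u c) \<and> (\<forall>b\<in>C. b < c \<longrightarrow> (\<exists>k\<in>C. u b < u k))"
      using least by (metis not_le)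
  next
    assume c: "c \<in> C \<and> (\<forall>k\<in>C. u k \<le> u c) \<and> (\<forall>b\<in>C. b < c \<longrightarrow> (\<exists>k\<in>C. u b < u k))"
    then have "\<And>b. ?P b \<Longrightarrow> c \<le> b" by (meson not_le)
    then show "least_argmax u C = c"
      unfolding least_Min using c by (intro Min_eqI[OF fin]) auto
  qed
qed

lemma least_argmaxD:
  assumes "finite C" "C \<noteq> {}"
  shows "least_argmax u C \<in> C" and "k \<in> C \<Longrightarrow> u k \<le> u (least_argmax u C)"
  using least_argmax_eq_iff[OF assms, of u "least_argmax u C"] by auto

lemma greedy_choice_SomeD:
  assumes "finite C" "greedy_choice u C = Some a"
  shows "a \<in> C" and "k \<in> C \<Longrightarrow> u k \<le> u a"
  using assms least_argmaxD[OF assms(1)] by (auto simp: greedy_choice_def split: if_splits)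

lemma greedy_choice_eq_None_iff [simp]: "greedy_choice u C = None \<longleftrightarrow> C = {}"
  by (simp add: greedy_choice_def)

lemma greedy_choice_subset:
  assumes "finite C" "C' \<subseteq> C" "greedy_choice u C = Some a" "a \<in> C'"
  shows "greedy_choice u C' = Some a"
proof -
  have C': "finite C'" "C' \<noteq> {}" using assms(1,2,4) finite_subset by auto
  have "C \<noteq> {}" "least_argmax u C = a"
    using assms(3) by (auto simp: greedy_choice_def split: if_splits)
  then have a: "\<forall>k\<in>C. u k \<le> u a" "\<forall>b\<in>C. b < a \<longrightarrow> (\<exists>k\<in>C. u b < u k)"
    using least_argmax_eq_iff[OF assms(1)] by blast+
  have "\<forall>b\<in>C'. b < a \<longrightarrow> (\<exists>k\<in>C'. u b < u k)"
  proof (intro ballI impI)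
    fix b assume "b \<in> C'" "b < a"
    then have "u b < u a" using a assms(2) by (meson order_less_le_trans subsetD)
    then show "\<exists>k\<in>C'. u b < u k" using assms(4) by blast
  qed
  then have "least_argmax u C' = a"
    using least_argmax_eq_iff[OF C'] a(1) assms(2,4) by blast
  then show ?thesis using C'(2) by (simp add: greedy_choice_def)
qed

lemma greedy_choice_remove_unchosen:
  assumes "finite C" "C' \<subseteq> C" "C \<subseteq> insert k C'" "greedy_choice u C \<noteq> Some k"
  shows "greedy_choice u C' = greedy_choice u C"
proof (cases "greedy_choice u C")
  case None
  then show ?thesis using assms(2) by auto
next
  case (Some a)
  then have "a \<in> C'" using greedy_choice_SomeD(1)[OF assms(1)] assms(3,4) by auto
  then show ?thesis using greedy_choice_subset[OF assms(1,2) Some] Some by simp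
qed

lemma greedy_choice_value_mono:
  assumes "finite C" "C' \<subseteq> C" "\<And>k. k \<in> C \<Longrightarrow> 0 \<le> u k"
  shows "case_option 0 u (greedy_choice u C') \<le> case_option 0 u (greedy_choice u C)"
proof (cases "greedy_choice u C")
  case None
  then show ?thesis using assms(2) by simp
next
  case (Some a)
  have "u b \<le> u a" if "greedy_choice u C' = Some b" for b
    using that greedy_choice_SomeD(1)[of C' u b] greedy_choice_SomeD(2)[OF assms(1) Some]
      assms(1,2) finite_subset by blast
  then show ?thesis
    using Some assms(3) greedy_choice_SomeD(1)[OF assms(1) Some] by (auto split: option.split)
qed

lemma greedy_choice_cong:
  assumes "\<And>k. k \<in> C \<Longrightarrow> u k = u' k"
  shows "greedy_choice u C = greedy_choice u' C"
proof -
  have "(\<lambda>j. j \<in> C \<and> (\<forall>k\<in>C. u k \<le> u j)) = (\<lambda>j. j \<in> C \<and> (\<forall>k\<in>C. u' k \<le> u' j))"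
    using assms by (intro ext) auto
  then show ?thesis by (simp add: greedy_choice_def least_argmax_def)
qed

lemma eps_choose_eq_greedy_choice:
  "eps_choose eps w S E x i m = greedy_choice (eps_util eps w x) ((S - ran m) \<inter> {k. (i, k) \<in> E})"
proof -
  have "{j \<in> S. (i, j) \<in> E \<and> j \<notin> ran m} = (S - ran m) \<inter> {k. (i, k) \<in> E}" by auto
  then show ?thesis by (simp add: eps_choose_def greedy_choice_def least_argmax_def Let_def)
qed

lemma ran_eps_ranking_run_subset:
  assumes "finite S" "ran m \<subseteq> S"
  shows "ran (eps_ranking_run eps w S E x bs m) \<subseteq> S"
  using assms(2)
proof (induction bs arbitrary: m)
  case (Cons i bs)
  let ?c = "eps_choose eps w S E x i m"
  have "set_option ?c \<subseteq> S"
    using greedy_choice_SomeD(1)[of "(S - ran m) \<inter> {k. (i, k) \<in> E}"] assms(1)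
    by (cases ?c) (auto simp: eps_choose_eq_greedy_choice)
  moreover have "ran (m(i := ?c)) \<subseteq> ran m \<union> set_option ?c" by (auto simp: ran_def)
  ultimately have "ran (m(i := ?c)) \<subseteq> S" using Cons.prems by blast
  then show ?case by (simp only: eps_ranking_run.simps) (rule Cons.IH)
qed simp

lemma ran_eps_ranking_subset: "finite S \<Longrightarrow> ran (eps_ranking eps w S E x bs) \<subseteq> S"
  unfolding eps_ranking_def by (rule ran_eps_ranking_run_subset) simp_all

lemma eps_ranking_run_cong:
  assumes "\<And>k. k \<in> S \<Longrightarrow> x k = x' k"
  shows "eps_ranking_run eps w S E x bs m = eps_ranking_run eps w S E x' bs m"
proof (induction bs arbitrary: m)
  case (Cons i bs)
  have "eps_choose eps w S E x i m = eps_choose eps w S E x' i m"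
    unfolding eps_choose_eq_greedy_choice using assms
    by (intro greedy_choice_cong) (simp add: eps_util_def)
  then show ?case by (simp only: eps_ranking_run.simps Cons.IH)
qed simp

lemma utility_cong:
  assumes "finite S" "\<And>k. k \<in> S \<Longrightarrow> x k = x' k"
  shows "utility eps w S E x bs i = utility eps w S E x' bs i"
proof -
  have m: "eps_ranking eps w S E x bs = eps_ranking eps w S E x' bs"
    unfolding eps_ranking_def using assms(2) by (rule eps_ranking_run_cong)
  have "k \<in> S" if "eps_ranking eps w S E x bs i = Some k" for k
    using ran_eps_ranking_subset[OF assms(1), of eps w E x bs] ranI[of "eps_ranking eps w S E x bs" i k, OF that] by blast
  then show ?thesis
    unfolding utility_def m using assms(2) by (auto simp: eps_util_def split: option.split)
qed

lemma eps_util_nonneg: "eps > 0 \<Longrightarrow> 0 \<le> w k \<Longrightarrow> x k \<le> 1 \<Longrightarrow> 0 \<le> eps_util eps w x k"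
  unfolding eps_util_def by simp

lemma eps_rev_nonneg: "0 \<le> w k \<Longrightarrow> 0 \<le> eps_rev eps w x k"
  unfolding eps_rev_def by simp

lemma eps_util_le: "0 \<le> w k \<Longrightarrow> eps_util eps w x k \<le> w k"
  unfolding eps_util_def by (simp add: mult_left_le)

lemma eps_rev_le: "eps > 0 \<Longrightarrow> 0 \<le> w k \<Longrightarrow> x k \<le> 1 \<Longrightarrow> eps_rev eps w x k \<le> w k"
  unfolding eps_rev_def by (simp add: mult_left_le)

lemma utility_bounds:
  assumes "eps > 0" "finite S" "\<forall>k\<in>S. 0 \<le> w k" "\<forall>k\<in>S. x k \<le> 1"
  shows "0 \<le> utility eps w S E x bs i" "utility eps w S E x bs i \<le> (\<Sum>k\<in>S. w k)"
proof -
  have "0 \<le> eps_util eps w x k \<and> eps_util eps w x k \<le> (\<Sum>k\<in>S. w k)"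
    if "eps_ranking eps w S E x bs i = Some k" for k
  proof -
    have "k \<in> S" using ran_eps_ranking_subset[OF assms(2), of eps w E x bs] ranI[of "eps_ranking eps w S E x bs" i k, OF that] by blast
    then have "0 \<le> eps_util eps w x k" "eps_util eps w x k \<le> w k" "w k \<le> (\<Sum>k\<in>S. w k)"
      using assms by (auto intro: eps_util_nonneg eps_util_le member_le_sum)
    then show ?thesis by linarith
  qed
  moreover have "0 \<le> (\<Sum>k\<in>S. w k)" using assms(3) by (simp add: sum_nonneg)
  ultimately show "0 \<le> utility eps w S E x bs i" "utility eps w S E x bs i \<le> (\<Sum>k\<in>S. w k)"
    unfolding utility_def by (auto split: option.split)
qed

lemma revenue_bounds:
  assumes "eps > 0" "finite S" "\<forall>k\<in>S. 0 \<le> w k" "\<forall>k\<in>S. x k \<le> 1"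
  shows "0 \<le> revenue eps w S E x bs j" "revenue eps w S E x bs j \<le> (\<Sum>k\<in>S. w k)"
proof -
  have "0 \<le> eps_rev eps w x j \<and> eps_rev eps w x j \<le> (\<Sum>k\<in>S. w k)"
    if "j \<in> ran (eps_ranking eps w S E x bs)"
  proof -
    have "j \<in> S" using ran_eps_ranking_subset[OF assms(2), of eps w E x bs] that by blast
    then have "0 \<le> eps_rev eps w x j" "eps_rev eps w x j \<le> w j" "w j \<le> (\<Sum>k\<in>S. w k)"
      using assms by (auto intro: eps_rev_nonneg eps_rev_le member_le_sum)
    then show ?thesis by linarith
  qed
  moreover have "0 \<le> (\<Sum>k\<in>S. w k)" using assms(3) by (simp add: sum_nonneg)
  ultimately show "0 \<le> revenue eps w S E x bs j" "revenue eps w S E x bs j \<le> (\<Sum>k\<in>S. w k)"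
    unfolding revenue_def by auto
qed

section \<open>Coupling with the instance without seller j\<close>

definition extends_by_at_most_one :: "'a set \<Rightarrow> 'a set \<Rightarrow> bool" where
  "extends_by_at_most_one A B \<longleftrightarrow> A = B \<or> (\<exists>k. k \<notin> B \<and> A = insert k B)"

lemma extends_by_at_most_one_greedy_choice:
  assumes "finite A" "extends_by_at_most_one A B"
  shows "extends_by_at_most_one (A - set_option (greedy_choice u (A \<inter> N)))
    (B - set_option (greedy_choice u (B \<inter> N)))"
proof -
  consider "A = B" | k where "k \<notin> B" "A = insert k B"
    using assms(2) unfolding extends_by_at_most_one_def by blast
  then show ?thesis
  proof cases
    case 1
    then show ?thesis by (simp add: extends_by_at_most_one_def)
  next
    case (2 k)
    have sub: "B \<inter> N \<subseteq> A \<inter> N" "A \<inter> N \<subseteq> insert k (B \<inter> N)" using 2 by auto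
    show ?thesis
    proof (cases "greedy_choice u (A \<inter> N) = Some k")
      case True
      then have A': "A - set_option (greedy_choice u (A \<inter> N)) = B" using 2 by auto
      show ?thesis
      proof (cases "greedy_choice u (B \<inter> N)")
        case None
        then show ?thesis unfolding A' None by (simp add: extends_by_at_most_one_def)
      next
        case (Some b)
        then have "b \<in> B" using greedy_choice_SomeD(1)[of "B \<inter> N"] assms(1) 2(2) by auto
        then have "B = insert b (B - {b})" by auto
        then show ?thesis unfolding A' Some extends_by_at_most_one_def by auto
      qed
    next
      case False
      then have "greedy_choice u (B \<inter> N) = greedy_choice u (A \<inter> N)"
        using greedy_choice_remove_unchosen[OF _ sub] assms(1) by simp
      moreover have "A - set_option (greedy_choice u (A \<inter> N))
          = insert k (B - set_option (greedy_choice u (A \<inter> N)))"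
        using False 2 by auto
      ultimately show ?thesis
        using 2(1) unfolding extends_by_at_most_one_def by auto
    qed
  qed
qed

definition matched_value :: "('s \<Rightarrow> real) \<Rightarrow> ('b \<Rightarrow> 's option) \<Rightarrow> 'b \<Rightarrow> real" where
  "matched_value u m b = (case m b of None \<Rightarrow> 0 | Some k \<Rightarrow> u k)"

(* Invariant between the run m on S and the run m' on S - {j}, driven by the same samples,
   before the buyers in rest have arrived. *)
definition ranking_coupled ::
  "'s set \<Rightarrow> 's \<Rightarrow> ('b \<times> 's) set \<Rightarrow> ('s \<Rightarrow> real) \<Rightarrow> 'b list
    \<Rightarrow> ('b \<Rightarrow> 's option) \<Rightarrow> ('b \<Rightarrow> 's option) \<Rightarrow> bool" where
  "ranking_coupled S j E u rest m m' \<longleftrightarrow>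
     (\<forall>b\<in>set rest. m b = None \<and> m' b = None) \<and>
     extends_by_at_most_one (S - ran m) (S - {j} - ran m') \<and>
     (\<forall>b. matched_value u m' b \<le> matched_value u m b) \<and>
     (j \<notin> ran m \<longrightarrow> m = m' \<and> (\<forall>b. (b, j) \<in> E \<longrightarrow> b \<in> set rest \<or> u j \<le> matched_value u m b))"

lemma ran_fun_upd_None: "m i = None \<Longrightarrow> ran (m(i := v)) = ran m \<union> set_option v"
  by (cases v) (simp_all add: fun_upd_idem)

lemma ranking_coupled_step_unmatched:
  assumes "finite S" "j \<in> S" "ranking_coupled S j E u (i # rest) m m'"
    and c: "c = greedy_choice u ((S - ran m) \<inter> {k. (i, k) \<in> E})"
    and c': "c' = greedy_choice u ((S - {j} - ran m') \<inter> {k. (i, k) \<in> E})"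
    and "j \<notin> ran (m(i := c))"
  shows "m(i := c) = m'(i := c') \<and>
    (\<forall>b. (b, j) \<in> E \<longrightarrow> b \<in> set rest \<or> u j \<le> matched_value u (m(i := c)) b)"
proof -
  define A B N where "A = S - ran m" and "B = S - {j} - ran m'" and "N = {k. (i, k) \<in> E}"
  from assms(3) have "m i = None"
    and j_free: "j \<notin> ran m \<Longrightarrow> m = m' \<and>
      (\<forall>b. (b, j) \<in> E \<longrightarrow> b = i \<or> b \<in> set rest \<or> u j \<le> matched_value u m b)"
    unfolding ranking_coupled_def by auto
  then have "j \<notin> ran m" "c \<noteq> Some j" using assms(6) by (auto simp: ran_fun_upd_None)
  then have "m = m'" and A: "A = insert j B" "j \<notin> B"
    using j_free assms(2) by (auto simp: A_def B_def)
  have fin: "finite (A \<inter> N)" using assms(1) by (simp add: A_def)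
  have "c' = c"
    using greedy_choice_remove_unchosen[OF fin, of "B \<inter> N" j u] A \<open>c \<noteq> Some j\<close> \<open>m = m'\<close>
    by (auto simp: c c' A_def B_def N_def)
  moreover have "u j \<le> matched_value u (m(i := c)) i" if "(i, j) \<in> E"
  proof -
    have "j \<in> A \<inter> N" using that A by (simp add: N_def)
    then obtain a where "c = Some a" "u j \<le> u a"
      using greedy_choice_SomeD(2)[OF fin] by (cases c) (auto simp: c A_def N_def)
    then show ?thesis by (simp add: matched_value_def)
  qed
  ultimately show ?thesis
    using j_free \<open>j \<notin> ran m\<close> \<open>m = m'\<close> by (auto simp: matched_value_def)
qed

lemma ranking_coupled_step:
  assumes "finite S" "j \<in> S" "\<forall>k\<in>S. 0 \<le> u k"
    and coupled: "ranking_coupled S j E u (i # rest) m m'" and "i \<notin> set rest"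
  defines "N \<equiv> {k. (i, k) \<in> E}"
  shows "ranking_coupled S j E u rest
    (m(i := greedy_choice u ((S - ran m) \<inter> N))) (m'(i := greedy_choice u ((S - {j} - ran m') \<inter> N)))"
proof -
  define A B c c' where "A = S - ran m" and "B = S - {j} - ran m'"
    and "c = greedy_choice u (A \<inter> N)" and "c' = greedy_choice u (B \<inter> N)"
  from coupled have unassigned: "m i = None" "m' i = None" "\<forall>b\<in>set rest. m b = None \<and> m' b = None"
    and free: "extends_by_at_most_one A B" and le: "\<forall>b. matched_value u m' b \<le> matched_value u m b"
    unfolding ranking_coupled_def A_def B_def by auto
  have fin: "finite A" using assms(1) by (simp add: A_def)
  have sub: "B \<inter> N \<subseteq> A \<inter> N" using free by (auto simp: extends_by_at_most_one_def)
  have free_upd: "S - ran (m(i := c)) = A - set_option c" "S - {j} - ran (m'(i := c')) = B - set_option c'"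
    using unassigned by (auto simp: ran_fun_upd_None A_def B_def)
  have nonneg: "\<And>k. k \<in> A \<inter> N \<Longrightarrow> 0 \<le> u k" using assms(3) by (auto simp: A_def)
  have "matched_value u (m'(i := c')) b \<le> matched_value u (m(i := c)) b" for b
  proof (cases "b = i")
    case True
    then show ?thesis
      using greedy_choice_value_mono[OF _ sub nonneg] fin by (simp add: matched_value_def c_def c'_def)
  next
    case False
    then show ?thesis using le by (simp add: matched_value_def)
  qed
  moreover have "\<forall>b\<in>set rest. (m(i := c)) b = None \<and> (m'(i := c')) b = None"
    using unassigned(3) assms(5) by auto
  moreover have "extends_by_at_most_one (S - ran (m(i := c))) (S - {j} - ran (m'(i := c')))"
    unfolding free_upd unfolding c_def c'_def by (rule extends_by_at_most_one_greedy_choice[OF fin free])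
  moreover have "j \<notin> ran (m(i := c)) \<Longrightarrow> m(i := c) = m'(i := c') \<and>
      (\<forall>b. (b, j) \<in> E \<longrightarrow> b \<in> set rest \<or> u j \<le> matched_value u (m(i := c)) b)"
    by (rule ranking_coupled_step_unmatched[OF assms(1,2) coupled
          c_def[unfolded A_def N_def] c'_def[unfolded B_def N_def]])
  ultimately show ?thesis
    unfolding ranking_coupled_def A_def[symmetric] B_def[symmetric]
      c_def[symmetric] c'_def[symmetric] by blast
qed

lemma ranking_coupled_run:
  assumes "finite S" "j \<in> S" "\<forall>k\<in>S. 0 \<le> eps_util eps w x k"
  shows "distinct rest \<Longrightarrow> ranking_coupled S j E (eps_util eps w x) rest m m' \<Longrightarrow>
    ranking_coupled S j E (eps_util eps w x) []
      (eps_ranking_run eps w S E x rest m) (eps_ranking_run eps w (S - {j}) E x rest m')"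
proof (induction rest arbitrary: m m')
  case (Cons i rest)
  then show ?case
    using ranking_coupled_step[OF assms Cons.prems(2)] by (simp add: eps_choose_eq_greedy_choice)
qed simp

lemma ranking_coupled_init:
  assumes "j \<in> S" "E \<subseteq> set bs \<times> S"
  shows "ranking_coupled S j E u bs Map.empty Map.empty"
proof -
  have "S = insert j (S - {j})" "j \<notin> S - {j}" using assms(1) by auto
  then show ?thesis
    using assms(2) by (auto simp: ranking_coupled_def extends_by_at_most_one_def matched_value_def)
qed

definition threshold_bound ::
  "real \<Rightarrow> ('s::linorder \<Rightarrow> real) \<Rightarrow> 's set \<Rightarrow> ('b \<times> 's) set \<Rightarrow> ('s \<Rightarrow> real)
    \<Rightarrow> 'b list \<Rightarrow> 'b \<Rightarrow> 's \<Rightarrow> real" where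
  "threshold_bound eps w S E x bs i j =
     (let c = utility eps w (S - {j}) E x bs i
      in c + (if c < eps_util eps w x j then eps_rev eps w x j else 0))"

lemma threshold_bound_le_revenue_utility:
  assumes "eps > 0" "finite S" "distinct bs" "E \<subseteq> set bs \<times> S" "(i, j) \<in> E"
    and "\<forall>k\<in>S. 0 \<le> w k" "\<forall>k\<in>S. x k \<le> 1"
  shows "threshold_bound eps w S E x bs i j \<le> revenue eps w S E x bs j + utility eps w S E x bs i"
proof -
  let ?u = "eps_util eps w x"
  define m m' where "m = eps_ranking eps w S E x bs" and "m' = eps_ranking eps w (S - {j}) E x bs"
  have "j \<in> S" using assms(4,5) by auto
  have "\<forall>k\<in>S. 0 \<le> ?u k" using assms(1,6,7) by (simp add: eps_util_nonneg)
  then have "ranking_coupled S j E ?u [] m m'"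
    unfolding m_def m'_def eps_ranking_def
    by (rule ranking_coupled_run[OF assms(2) \<open>j \<in> S\<close> _ assms(3) ranking_coupled_init[OF \<open>j \<in> S\<close> assms(4)]])
  then have "matched_value ?u m' i \<le> matched_value ?u m i"
    and "j \<notin> ran m \<Longrightarrow> ?u j \<le> matched_value ?u m' i"
    using assms(5) unfolding ranking_coupled_def by auto
  moreover have "0 \<le> eps_rev eps w x j" using assms(6) \<open>j \<in> S\<close> by (simp add: eps_rev_nonneg)
  moreover have "utility eps w S E x bs i = matched_value ?u m i"
    and "utility eps w (S - {j}) E x bs i = matched_value ?u m' i"
    and "revenue eps w S E x bs j = (if j \<in> ran m then eps_rev eps w x j else 0)"
    by (simp_all add: utility_def revenue_def matched_value_def m_def m'_def)
  ultimately show ?thesis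
    unfolding threshold_bound_def Let_def by (cases "j \<in> ran m") auto
qed

section \<open>Measurability\<close>

lemma measurable_simple_function_apply:
  assumes "simple_function M g" "\<And>c. f c \<in> measurable M N"
  shows "(\<lambda>x. f (g x) x) \<in> measurable M N"
proof (rule measurable_compose_countable'[where I = "g ` space M"])
  show "g \<in> measurable M (count_space (g ` space M))"
    using assms(1) by (auto simp: simple_function_def measurable_count_space_eq2)
  show "countable (g ` space M)"
    using assms(1) by (simp add: simple_function_def countable_finite)
qed (use assms(2) in auto)

lemma simple_function_apply:
  assumes "simple_function M g" "\<And>c. simple_function M (f c)"
  shows "simple_function M (\<lambda>x. f (g x) x)"
proof -
  have "(\<lambda>x. f (g x) x) ` space M \<subseteq> (\<Union>c\<in>g ` space M. f c ` space M)" by auto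
  moreover have "finite (\<Union>c\<in>g ` space M. f c ` space M)"
    using assms by (intro finite_UN_I) (auto dest: simple_functionD(1))
  ultimately have "finite ((\<lambda>x. f (g x) x) ` space M)" by (rule finite_subset)
  moreover have "(\<lambda>x. f (g x) x) \<in> measurable M (count_space UNIV)"
    by (rule measurable_simple_function_apply[OF assms(1) measurable_simple_function[OF assms(2)]])
  ultimately show ?thesis by (simp add: simple_function_eq_measurable)
qed

lemma measurable_sample_space_component [measurable]:
  "(\<lambda>x. x k) \<in> borel_measurable (sample_space S)"
proof (cases "k \<in> S")
  case True
  have "measurable (sample_space S) (uniform_measure lborel {0..1::real}) = borel_measurable (sample_space S)"
    by (rule measurable_cong_sets) simp_all
  then show ?thesis
    using measurable_component_singleton[OF True, of "\<lambda>_. uniform_measure lborel {0..1}"]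
    unfolding sample_space_def by metis
next
  case False
  have "x k = undefined" if "x \<in> space (sample_space S)" for x
    using that False unfolding sample_space_def space_PiM by (rule PiE_arb)
  then show ?thesis
    using measurable_cong[of "sample_space S" "\<lambda>x. x k" "\<lambda>x. undefined"] by simp
qed

lemma eps_util_measurable [measurable]: "(\<lambda>x. eps_util eps w x k) \<in> borel_measurable (sample_space S)"
  unfolding eps_util_def by measurable

lemma eps_rev_measurable [measurable]: "(\<lambda>x. eps_rev eps w x k) \<in> borel_measurable (sample_space S)"
  unfolding eps_rev_def by measurable

lemma simple_function_greedy_choice:
  assumes "finite C" "\<And>k. (\<lambda>x. u x k) \<in> borel_measurable M"
  shows "simple_function M (\<lambda>x. greedy_choice (u x) C)"
proof (cases "C = {}")
  case True
  then show ?thesis by (simp add: greedy_choice_def)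
next
  case False
  let ?f = "\<lambda>x. least_argmax (u x) C"
  have le: "Measurable.pred M (\<lambda>x. u x a \<le> u x b)"
    and less: "Measurable.pred M (\<lambda>x. u x a < u x b)" for a b
    unfolding pred_def by (intro borel_measurable_le borel_measurable_less assms(2))+
  have "Measurable.pred M (\<lambda>x. ?f x = c)" for c
    unfolding least_argmax_eq_iff[OF assms(1) False]
    by (intro pred_intros_logic pred_intros_finite assms(1) measurable_const le less) simp_all
  then have "?f -` {c} \<inter> space M \<in> sets M" for c
    unfolding pred_def by (simp add: vimage_def Int_def conj_commute)
  moreover have "?f ` space M \<subseteq> C"
    using least_argmaxD(1)[OF assms(1) False] by (rule image_subsetI)
  then have "finite (?f ` space M)" using assms(1) by (rule finite_subset)
  ultimately have "simple_function M ?f" by (simp add: simple_function_def)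
  then have "simple_function M (Some \<circ> ?f)" by (rule simple_function_compose)
  with False show ?thesis by (simp add: greedy_choice_def comp_def)
qed

lemma simple_function_eps_ranking_run:
  assumes "finite S'" "simple_function (sample_space S) m"
  shows "simple_function (sample_space S) (\<lambda>x. eps_ranking_run eps w S' E x bs (m x))"
  using assms(2)
proof (induction bs arbitrary: m)
  case (Cons i bs)
  have "simple_function (sample_space S) (\<lambda>x. c(i := eps_choose eps w S' E x i c))" for c
    using simple_function_compose[OF simple_function_greedy_choice[of "(S' - ran c) \<inter> {k. (i, k) \<in> E}"
        "\<lambda>x. eps_util eps w x" "sample_space S"], where g = "\<lambda>v. c(i := v)"] assms(1)
    by (simp add: eps_choose_eq_greedy_choice comp_def)
  then have "simple_function (sample_space S) (\<lambda>x. (m x)(i := eps_choose eps w S' E x i (m x)))"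
    by (rule simple_function_apply[OF Cons.prems])
  then show ?case using Cons.IH by simp
qed simp

lemma simple_function_eps_ranking:
  "finite S' \<Longrightarrow> simple_function (sample_space S) (\<lambda>x. eps_ranking eps w S' E x bs)"
  unfolding eps_ranking_def by (rule simple_function_eps_ranking_run) simp_all

lemma utility_measurable:
  assumes "finite S'"
  shows "(\<lambda>x. utility eps w S' E x bs i) \<in> borel_measurable (sample_space S)"
proof -
  have "(\<lambda>x. case m i of None \<Rightarrow> 0 | Some k \<Rightarrow> eps_util eps w x k) \<in> borel_measurable (sample_space S)"
    for m
    by (cases "m i") simp_all
  then show ?thesis
    unfolding utility_def by (rule measurable_simple_function_apply[OF simple_function_eps_ranking[OF assms]])
qed

lemma revenue_measurable:
  assumes "finite S'"
  shows "(\<lambda>x. revenue eps w S' E x bs j) \<in> borel_measurable (sample_space S)"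
  unfolding revenue_def
  by (rule measurable_simple_function_apply[OF simple_function_eps_ranking[OF assms],
        where f = "\<lambda>m x. if j \<in> ran m then eps_rev eps w x j else 0"]) simp

lemma threshold_bound_measurable:
  assumes "finite S"
  shows "(\<lambda>x. threshold_bound eps w S E x bs i j) \<in> borel_measurable (sample_space S')"
proof -
  have "(\<lambda>x. utility eps w (S - {j}) E x bs i) \<in> borel_measurable (sample_space S')"
    using assms by (intro utility_measurable) simp
  then show ?thesis unfolding threshold_bound_def Let_def by measurable
qed

section \<open>Integration over the samples\<close>

lemma prob_space_sample_space: "prob_space (sample_space S)"
  unfolding sample_space_def by (intro prob_space_PiM prob_space_uniform_measure) simp_all

lemma AE_sample_space_le_1:
  assumes "finite S"
  shows "AE x in sample_space S. \<forall>k\<in>S. x k \<le> 1"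
proof (rule AE_finite_allI[OF assms])
  fix k assume "k \<in> S"
  have "AE y in uniform_measure lborel {0..1::real}. y \<le> 1"
    by (rule AE_uniform_measureI) simp_all
  then show "AE x in sample_space S. x k \<le> 1"
    unfolding sample_space_def using \<open>k \<in> S\<close>
    by (intro AE_PiM_component prob_space_uniform_measure) simp_all
qed

lemma nn_integral_sample_space_insert:
  assumes "finite S" "j \<notin> S" "f \<in> borel_measurable (sample_space (insert j S))"
  shows "(\<integral>\<^sup>+x. f x \<partial>sample_space (insert j S)) =
    (\<integral>\<^sup>+x. (\<integral>\<^sup>+y. f (x(j := y)) \<partial>uniform_measure lborel {0..1}) \<partial>sample_space S)"
proof -
  interpret product_sigma_finite "\<lambda>_. uniform_measure lborel {0..1::real}"
    by (intro product_sigma_finite.intro prob_space_imp_sigma_finite prob_space_uniform_measure) simp_all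
  show ?thesis
    using product_nn_integral_insert[OF assms(1,2)] assms(3) unfolding sample_space_def by simp
qed

lemma integral_ge_of_nn_integral_ge:
  assumes "integrable M f" "AE x in M. 0 \<le> f x" "ennreal c \<le> (\<integral>\<^sup>+x. ennreal (f x) \<partial>M)"
  shows "c \<le> integral\<^sup>L M f"
proof -
  have "ennreal c \<le> ennreal (integral\<^sup>L M f)"
    using assms(3) nn_integral_eq_integral[OF assms(1,2)] by simp
  moreover have "0 \<le> integral\<^sup>L M f" using assms(2) by (rule integral_nonneg_AE)
  ultimately show ?thesis by (auto simp: ennreal_le_iff2)
qed

lemma nn_integral_exp_interval:
  fixes W a t :: real
  assumes "0 \<le> t" "0 \<le> W"
  shows "(\<integral>\<^sup>+y\<in>{0..<t}. ennreal (W * exp (y - a)) \<partial>lborel) = ennreal (W * exp (t - a) - W * exp (- a))"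
proof -
  have "((\<lambda>y. W * exp (y - a)) has_vector_derivative W * exp (y - a)) (at y within {0..t})" for y
    unfolding has_real_derivative_iff_has_vector_derivative[symmetric]
    by (auto intro!: derivative_eq_intros)
  then have "((\<lambda>y. W * exp (y - a)) has_integral (W * exp (t - a) - W * exp (0 - a))) {0..t}"
    by (intro fundamental_theorem_of_calculus[OF assms(1)])
  then have "(\<integral>\<^sup>+y\<in>{0..t}. ennreal (W * exp (y - a)) \<partial>lborel) = ennreal (W * exp (t - a) - W * exp (- a))"
    using assms(2) by (intro nn_integral_has_integral_lebesgue') simp_all
  moreover have "AE y in lborel. ennreal (W * exp (y - a)) * indicator {0..<t} y
      = ennreal (W * exp (y - a)) * indicator {0..t} y"
    using AE_lborel_singleton[of t] by eventually_elim (auto simp: indicator_def)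
  ultimately show ?thesis by (simp add: nn_integral_cong_AE)
qed

lemma threshold_real_bound:
  fixes W c eps t :: real
  assumes "eps > 0" "W > 0" "0 \<le> c" "c < W" and t: "t = min 1 (1 + eps + ln (1 - c / W))"
  shows "(1 - 1 / exp 1 - eps) * W \<le> c + (W * exp (t - 1 - eps) - W * exp (- 1 - eps))"
proof -
  have exp_shift: "exp (- 1 - eps) = exp (- eps) / exp 1" by (simp add: exp_diff exp_minus field_simps)
  have "exp (- eps) \<le> 1" using assms(1) by simp
  then have exp_le: "exp (- 1 - eps) \<le> 1 / exp 1" unfolding exp_shift by (simp add: divide_right_mono)
  show ?thesis
  proof (cases "1 \<le> 1 + eps + ln (1 - c / W)")
    case True
    then have "t = 1" using t by simp
    have "1 - eps \<le> exp (- eps)" using exp_ge_add_one_self[of "- eps"] by simp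
    then have "(1 - eps) * (1 - 1 / exp 1) \<le> exp (- eps) * (1 - 1 / exp 1)"
      by (rule mult_right_mono) simp
    moreover have "1 - 1 / exp 1 - eps \<le> (1 - eps) * (1 - 1 / exp 1)"
      using assms(1) by (simp add: field_simps)
    ultimately have "1 - 1 / exp 1 - eps \<le> exp (- eps) * (1 - 1 / exp 1)" by linarith
    then have "(1 - 1 / exp 1 - eps) * W \<le> exp (- eps) * (1 - 1 / exp 1) * W"
      using assms(2) by (intro mult_right_mono) simp_all
    also have "\<dots> = W * exp (t - 1 - eps) - W * exp (- 1 - eps)"
      unfolding \<open>t = 1\<close> exp_shift by (simp add: field_simps)
    finally show ?thesis using assms(3) by simp
  next
    case False
    then have "t = 1 + eps + ln (1 - c / W)" using t by simp
    moreover have "0 < 1 - c / W" using assms(2,4) by simp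
    ultimately have "W * exp (t - 1 - eps) = W - c" using assms(2) by (simp add: field_simps)
    moreover have "W * exp (- 1 - eps) \<le> W / exp 1"
      using mult_left_mono[OF exp_le, of W] assms(2) by simp
    moreover have "(1 - 1 / exp 1 - eps) * W \<le> W - W / exp 1"
      using assms(1,2) by (simp add: field_simps)
    ultimately show ?thesis by linarith
  qed
qed

lemma nn_integral_threshold_interval:
  fixes W c eps t :: real
  assumes "0 \<le> W" "0 \<le> c" "0 \<le> t" "t \<le> 1"
    and above: "\<And>y. 0 \<le> y \<Longrightarrow> y < t \<Longrightarrow> c < W * (1 - exp (y - 1 - eps))"
  defines "g \<equiv> \<lambda>y. c + (if c < W * (1 - exp (y - 1 - eps)) then W * exp (y - 1 - eps) else 0)"
  shows "ennreal (c + (W * exp (t - 1 - eps) - W * exp (- 1 - eps))) \<le> (\<integral>\<^sup>+y\<in>{0..1}. ennreal (g y) \<partial>lborel)"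
proof -
  have "(\<integral>\<^sup>+y\<in>{0..<t}. ennreal (W * exp (y - 1 - eps)) \<partial>lborel)
      = ennreal (W * exp (t - 1 - eps) - W * exp (- 1 - eps))"
    using nn_integral_exp_interval[OF assms(3,1), of "1 + eps"] by (simp add: diff_diff_eq)
  moreover have "(\<integral>\<^sup>+y. ennreal c * indicator {0..1::real} y \<partial>lborel) = ennreal c"
    by (subst nn_integral_cmult_indicator) auto
  ultimately have "ennreal c + ennreal (W * exp (t - 1 - eps) - W * exp (- 1 - eps))
      = (\<integral>\<^sup>+y. ennreal c * indicator {0..1::real} y \<partial>lborel)
        + (\<integral>\<^sup>+y. ennreal (W * exp (y - 1 - eps)) * indicator {0..<t} y \<partial>lborel)"
    by simp
  also have "\<dots> = (\<integral>\<^sup>+y. ennreal c * indicator {0..1::real} y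
      + ennreal (W * exp (y - 1 - eps)) * indicator {0..<t} y \<partial>lborel)"
    by (intro nn_integral_add[symmetric]) auto
  also have "\<dots> \<le> (\<integral>\<^sup>+y\<in>{0..1}. ennreal (g y) \<partial>lborel)"
  proof (intro nn_integral_mono)
    fix y
    show "ennreal c * indicator {0..1::real} y + ennreal (W * exp (y - 1 - eps)) * indicator {0..<t} y
      \<le> ennreal (g y) * indicator {0..1::real} y"
    proof (cases "y \<in> {0..<t}")
      case True
      then have "g y = c + W * exp (y - 1 - eps)" using above by (simp add: g_def)
      then show ?thesis using True assms(1,2,4) by simp
    next
      case False
      have "c \<le> g y" using assms(1) by (simp add: g_def)
      then show ?thesis using False by (auto intro!: mult_right_mono ennreal_leI simp: indicator_def)
    qed
  qed
  finally have "ennreal c + ennreal (W * exp (t - 1 - eps) - W * exp (- 1 - eps))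
      \<le> (\<integral>\<^sup>+y\<in>{0..1}. ennreal (g y) \<partial>lborel)" .
  moreover have "W * exp (- 1 - eps) \<le> W * exp (t - 1 - eps)"
    using assms(1,3) by (intro mult_left_mono) simp_all
  ultimately show ?thesis using assms(2) by simp
qed

lemma nn_integral_threshold_ge:
  fixes W c eps :: real
  assumes "eps > 0" "0 \<le> W" "0 \<le> c"
  shows "ennreal ((1 - 1 / exp 1 - eps) * W) \<le> (\<integral>\<^sup>+y\<in>{0..1}.
    ennreal (c + (if c < W * (1 - exp (y - 1 - eps)) then W * exp (y - 1 - eps) else 0)) \<partial>lborel)"
    (is "ennreal ?K \<le> ?I")
proof (cases "?K \<le> c")
  case True
  have "ennreal (c + (W * exp (0 - 1 - eps) - W * exp (- 1 - eps))) \<le> ?I"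
    using assms(2,3) by (intro nn_integral_threshold_interval) simp_all
  then show ?thesis using True by (simp add: order_trans[OF ennreal_leI])
next
  case False
  have "exp (- 1 - eps) \<le> exp (- 1)" using assms(1) by simp
  then have "exp (- 1 - eps) \<le> 1 / exp 1 + eps"
    using assms(1) by (simp add: exp_minus inverse_eq_divide)
  then have "?K \<le> W * (1 - exp (- 1 - eps))"
    using assms(2) mult_left_mono[of "1 - 1 / exp 1 - eps" "1 - exp (- 1 - eps)" W] by (simp add: mult.commute)
  with False have c_below: "c < W * (1 - exp (- 1 - eps))" by linarith
  then have W: "W > 0" using assms(2,3) by (cases "W = 0") auto
  then have exp_below: "exp (- 1 - eps) < 1 - c / W" using c_below by (simp add: field_simps)
  then have "0 < 1 - c / W" using exp_gt_zero[of "- 1 - eps"] by linarith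
  define t where "t = min 1 (1 + eps + ln (1 - c / W))"
  have "- 1 - eps < ln (1 - c / W)"
    using exp_below \<open>0 < 1 - c / W\<close> by (metis exp_less_cancel_iff exp_ln)
  then have "0 \<le> t" by (simp add: t_def)
  have "c < W * (1 - exp (y - 1 - eps))" if "y < t" for y
  proof -
    have "y - 1 - eps < ln (1 - c / W)" using that by (simp add: t_def)
    then have "exp (y - 1 - eps) < 1 - c / W" using \<open>0 < 1 - c / W\<close> by (metis exp_less_cancel_iff exp_ln)
    then show ?thesis using W by (simp add: field_simps)
  qed
  then have "ennreal (c + (W * exp (t - 1 - eps) - W * exp (- 1 - eps))) \<le> ?I"
    using assms(2,3) \<open>0 \<le> t\<close> by (intro nn_integral_threshold_interval) (simp_all add: t_def)
  moreover have "?K \<le> c + (W * exp (t - 1 - eps) - W * exp (- 1 - eps))"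
    using \<open>0 < 1 - c / W\<close> W assms(1,3) by (intro threshold_real_bound[OF _ _ _ _ t_def]) (simp_all add: field_simps)
  ultimately show ?thesis by (simp add: order_trans[OF ennreal_leI])
qed

lemma nn_integral_uniform_unit_interval:
  "f \<in> borel_measurable lborel \<Longrightarrow>
    (\<integral>\<^sup>+y. f y \<partial>uniform_measure lborel {0..1::real}) = (\<integral>\<^sup>+y\<in>{0..1}. f y \<partial>lborel)"
  by (simp add: nn_integral_uniform_measure divide_ennreal_def)

lemma nn_integral_threshold_bound_coordinate:
  assumes "eps > 0" "finite S" "\<forall>k\<in>S. 0 \<le> w k" "\<forall>k\<in>S - {j}. x k \<le> 1" "0 \<le> w j"
  shows "ennreal ((1 - 1 / exp 1 - eps) * w j) \<le>
    (\<integral>\<^sup>+y. ennreal (threshold_bound eps w S E (x(j := y)) bs i j) \<partial>uniform_measure lborel {0..1})"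
proof -
  define c where "c = utility eps w (S - {j}) E x bs i"
  have "0 \<le> c" unfolding c_def using assms(1-4) by (intro utility_bounds(1)) auto
  have "utility eps w (S - {j}) E (x(j := y)) bs i = c" for y
    unfolding c_def using assms(2) by (intro utility_cong) auto
  then have "threshold_bound eps w S E (x(j := y)) bs i j
      = c + (if c < w j * (1 - exp (y - 1 - eps)) then w j * exp (y - 1 - eps) else 0)" for y
    by (simp add: threshold_bound_def eps_util_def eps_rev_def)
  then show ?thesis
    using nn_integral_threshold_ge[OF assms(1,5) \<open>0 \<le> c\<close>]
    by (simp add: nn_integral_uniform_unit_interval)
qed

lemma nn_integral_threshold_bound_ge:
  assumes "eps > 0" "finite S" "j \<in> S" "\<forall>k\<in>S. 0 \<le> w k"
  shows "ennreal ((1 - 1 / exp 1 - eps) * w j) \<le>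
    (\<integral>\<^sup>+x. ennreal (threshold_bound eps w S E x bs i j) \<partial>sample_space S)"
proof -
  let ?K = "(1 - 1 / exp 1 - eps) * w j"
  have S: "S = insert j (S - {j})" using assms(3) by auto
  have "ennreal ?K = (\<integral>\<^sup>+x. ennreal ?K \<partial>sample_space (S - {j}))"
    using prob_space.emeasure_space_1[OF prob_space_sample_space[of "S - {j}"]] by simp
  also have "\<dots> \<le> (\<integral>\<^sup>+x. (\<integral>\<^sup>+y. ennreal (threshold_bound eps w S E (x(j := y)) bs i j)
      \<partial>uniform_measure lborel {0..1}) \<partial>sample_space (S - {j}))"
    using AE_sample_space_le_1[of "S - {j}"] assms
    by (intro nn_integral_mono_AE) (auto elim!: eventually_mono intro!: nn_integral_threshold_bound_coordinate)
  also have "\<dots> = (\<integral>\<^sup>+x. ennreal (threshold_bound eps w S E x bs i j) \<partial>sample_space S)"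
    using assms(2) measurable_compose[OF threshold_bound_measurable[OF assms(2)] measurable_ennreal]
    by (intro nn_integral_sample_space_insert[of "S - {j}" j
          "\<lambda>x. ennreal (threshold_bound eps w S E x bs i j)", unfolded S[symmetric], symmetric]) auto
  finally show ?thesis .
qed

lemma AE_revenue_plus_utility_bounds:
  assumes "eps > 0" "finite S" "\<forall>k\<in>S. 0 \<le> w k"
  shows "AE x in sample_space S. 0 \<le> revenue eps w S E x bs j + utility eps w S E x bs i \<and>
    revenue eps w S E x bs j + utility eps w S E x bs i \<le> 2 * (\<Sum>k\<in>S. w k)"
proof (rule eventually_mono[OF AE_sample_space_le_1[OF assms(2)]])
  fix x :: "'a \<Rightarrow> real" assume "\<forall>k\<in>S. x k \<le> 1"
  then show "0 \<le> revenue eps w S E x bs j + utility eps w S E x bs i \<and>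
    revenue eps w S E x bs j + utility eps w S E x bs i \<le> 2 * (\<Sum>k\<in>S. w k)"
    using revenue_bounds[OF assms, of x E bs j] utility_bounds[OF assms, of x E bs i] by linarith
qed

lemma integrable_revenue_plus_utility:
  assumes "eps > 0" "finite S" "\<forall>k\<in>S. 0 \<le> w k"
  shows "integrable (sample_space S) (\<lambda>x. revenue eps w S E x bs j + utility eps w S E x bs i)"
proof (rule finite_measure.integrable_const_bound[OF prob_space.finite_measure[OF prob_space_sample_space]])
  show "AE x in sample_space S.
      norm (revenue eps w S E x bs j + utility eps w S E x bs i) \<le> 2 * (\<Sum>k\<in>S. w k)"
    using AE_revenue_plus_utility_bounds[OF assms, where E = E and bs = bs and i = i and j = j]
    by (rule eventually_mono) auto
  show "(\<lambda>x. revenue eps w S E x bs j + utility eps w S E x bs i) \<in> borel_measurable (sample_space S)"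
    using revenue_measurable[OF assms(2)] utility_measurable[OF assms(2)] by (rule borel_measurable_add)
qed

theorem lemma8:
  fixes eps :: real and S :: "'s::linorder set" and bs :: "'b list"
    and E :: "('b \<times> 's) set" and w :: "'s \<Rightarrow> real" and i :: 'b and j :: 's
  assumes "eps > 0"
    and "finite S"
    and "distinct bs"
    and "E \<subseteq> set bs \<times> S"
    and "\<And>k. k \<in> S \<Longrightarrow> w k \<ge> 0"
    and "(i, j) \<in> E"
  shows "(\<integral>x. revenue eps w S E x bs j + utility eps w S E x bs i \<partial>sample_space S)
           \<ge> (1 - 1 / exp 1 - eps) * w j"
proof -
  let ?F = "\<lambda>x. revenue eps w S E x bs j + utility eps w S E x bs i"
  have "j \<in> S" using assms(4,6) by auto
  have w: "\<forall>k\<in>S. 0 \<le> w k" using assms(5) by blast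
  have "ennreal ((1 - 1 / exp 1 - eps) * w j)
      \<le> (\<integral>\<^sup>+x. ennreal (threshold_bound eps w S E x bs i j) \<partial>sample_space S)"
    by (rule nn_integral_threshold_bound_ge[OF assms(1,2) \<open>j \<in> S\<close> w])
  also have "\<dots> \<le> (\<integral>\<^sup>+x. ennreal (?F x) \<partial>sample_space S)"
  proof (rule nn_integral_mono_AE[OF eventually_mono[OF AE_sample_space_le_1[OF assms(2)]]])
    fix x :: "'s \<Rightarrow> real" assume "\<forall>k\<in>S. x k \<le> 1"
    then show "ennreal (threshold_bound eps w S E x bs i j) \<le> ennreal (?F x)"
      by (intro ennreal_leI threshold_bound_le_revenue_utility[OF assms(1-4,6) w])
  qed
  finally show ?thesis
    using integrable_revenue_plus_utility[OF assms(1,2) w]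
      AE_revenue_plus_utility_bounds[OF assms(1,2) w, where E = E and bs = bs and i = i and j = j]
    by (intro integral_ge_of_nn_integral_ge) (auto elim: eventually_mono)
qed

end
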